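(* Let $G$ be an elementary abelian $2$-group and let $T\subseteq G$ be a generating subset of $G$ with $0\in T$. Let $\mathcal{U}$ be the group with presentation $$\mathcal{U}=\big\langle (t^{\mathcal U})_{t\in T}\;\big|\;(t^{\mathcal U})^2=1,\ t^{\mathcal U}s^{\mathcal U}(t^{\mathcal U})^{-1}=(2t-s)^{\mathcal U}\text{ for all } s,t\in T\big\rangle,$$ and let $\mathcal{W}$ be the subgroup generated by $\{(0,t,-1)\mid t\in T\}$ of the group $(G\wedge G)\times G\times\{1,-1\}$ with multiplication $(l,g,v)(l',g',v')=(l+l'+g\wedge(vg'),\,g+vg',\,vv')$. Let $\mathcal U\to\mathcal W$ be the group homomorphism determined by $t^{\mathcal U}\mapsto(0,t,-1)$ for $t\in T$. Then this homomorphism is injective if and only if the set $T\setminus\{0\}$ is $2$-independent in $G$.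
   Context: Since $2s=0$ in $G$, the relation reads $t^{\mathcal U}s^{\mathcal U}(t^{\mathcal U})^{-1}=s^{\mathcal U}$. A subset $M$ of an abelian group $G$ (here an $\mathbb{F}_2$-vector space) is called 2-dependent if the elements of the set $\{g\otimes g\mid g\in M\}$ are linearly dependent in $G\otimes G$, and 2-independent if it is not 2-dependent. The homomorphism $\mathcal U\to\mathcal W$ exists since the elements $(0,t,-1)$ satisfy the defining relations of $\mathcal U$. *)

theory Defs
  imports "HOL-Algebra.Algebra"
begin

definition elementary_abelian_2 :: "'a::ab_group_add itself \<Rightarrow> bool" where
  "elementary_abelian_2 _ \<longleftrightarrow> (\<forall>x::'a. x + x = 0)"

inductive_set add_span :: "'a::ab_group_add set \<Rightarrow> 'a set" for T where
  zero: "0 \<in> add_span T"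
| gen: "t \<in> T \<Longrightarrow> t \<in> add_span T"
| add: "x \<in> add_span T \<Longrightarrow> y \<in> add_span T \<Longrightarrow> x + y \<in> add_span T"
| neg: "x \<in> add_span T \<Longrightarrow> - x \<in> add_span T"

abbreviation FA :: "('a \<times> 'a \<Rightarrow>\<^sub>0 int) monoid" where
  "FA \<equiv> free_Abelian_group UNIV"

definition tensor_rels :: "('a::ab_group_add \<times> 'a \<Rightarrow>\<^sub>0 int) set" where
  "tensor_rels =
     {frag_of (a + b, c) - frag_of (a, c) - frag_of (b, c) | a b c. True} \<union>
     {frag_of (a, b + c) - frag_of (a, b) - frag_of (a, c) | a b c. True}"

definition wedge_rels :: "('a::ab_group_add \<times> 'a \<Rightarrow>\<^sub>0 int) set" where
  "wedge_rels = tensor_rels \<union> {frag_of (g, g) | g. True}"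

text \<open>G \<otimes> G and G \<wedge> G as quotient groups of the free abelian group on G \<times> G.\<close>
definition tensor_grp :: "('a::ab_group_add \<times> 'a \<Rightarrow>\<^sub>0 int) set monoid" where
  "tensor_grp = FA Mod (generate FA tensor_rels)"

definition tensor_elt :: "'a::ab_group_add \<Rightarrow> 'a \<Rightarrow> ('a \<times> 'a \<Rightarrow>\<^sub>0 int) set" where
  "tensor_elt g h = generate FA tensor_rels #>\<^bsub>FA\<^esub> frag_of (g, h)"

definition wedge_grp :: "('a::ab_group_add \<times> 'a \<Rightarrow>\<^sub>0 int) set monoid" where
  "wedge_grp = FA Mod (generate FA wedge_rels)"

definition wedge_elt :: "'a::ab_group_add \<Rightarrow> 'a \<Rightarrow> ('a \<times> 'a \<Rightarrow>\<^sub>0 int) set" where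
  "wedge_elt g h = generate FA wedge_rels #>\<^bsub>FA\<^esub> frag_of (g, h)"

text \<open>M is 2-dependent iff the elements of {g \<otimes> g | g \<in> M} are linearly dependent
  in the F_2-vector space G \<otimes> G, i.e. some nonempty finite subset sums to 0.\<close>
definition two_dependent :: "'a::ab_group_add set \<Rightarrow> bool" where
  "two_dependent M \<longleftrightarrow>
     (\<exists>F. finite F \<and> F \<noteq> {} \<and> F \<subseteq> (\<lambda>g. tensor_elt g g) ` M \<and>
          finprod tensor_grp id F = \<one>\<^bsub>tensor_grp\<^esub>)"

definition two_independent :: "'a::ab_group_add set \<Rightarrow> bool" where
  "two_independent M \<longleftrightarrow> \<not> two_dependent M"

definition sact :: "int \<Rightarrow> 'a::ab_group_add \<Rightarrow> 'a" where
  "sact v g = (if v = 1 then g else - g)"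

definition amb_grp ::
  "(('a::ab_group_add \<times> 'a \<Rightarrow>\<^sub>0 int) set \<times> 'a \<times> int) monoid" where
  "amb_grp = \<lparr>carrier = carrier wedge_grp \<times> UNIV \<times> {1, -1},
     monoid.mult = (\<lambda>(l, g, v) (l', g', v').
               (l \<otimes>\<^bsub>wedge_grp\<^esub> l' \<otimes>\<^bsub>wedge_grp\<^esub> wedge_elt g (sact v g'),
                g + sact v g', v * v')),
     one = (\<one>\<^bsub>wedge_grp\<^esub>, 0, 1)\<rparr>"

definition W_gen :: "'a::ab_group_add \<Rightarrow> ('a \<times> 'a \<Rightarrow>\<^sub>0 int) set \<times> 'a \<times> int" where
  "W_gen t = (\<one>\<^bsub>wedge_grp\<^esub>, t, -1)"

definition W_grp :: "'a::ab_group_add set \<Rightarrow> (('a \<times> 'a \<Rightarrow>\<^sub>0 int) set \<times> 'a \<times> int) monoid" where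
  "W_grp T = subgroup_generated amb_grp (W_gen ` T)"

text \<open>Words in the generators t^U (t \<in> T) and their inverses: (t, True) stands for t^U,
  (t, False) for its inverse.\<close>

definition U_relators :: "'a::ab_group_add set \<Rightarrow> ('a \<times> bool) list set" where
  "U_relators T =
     {[(t, True), (t, True)] | t. t \<in> T} \<union>
     {[(t, True), (s, True), (t, False), (t + t - s, False)] | s t.
        s \<in> T \<and> t \<in> T \<and> t + t - s \<in> T}"

inductive_set U_eq :: "'a::ab_group_add set \<Rightarrow> (('a \<times> bool) list \<times> ('a \<times> bool) list) set"
  for T where
  refl: "set w \<subseteq> T \<times> UNIV \<Longrightarrow> (w, w) \<in> U_eq T"
| sym: "(w, w') \<in> U_eq T \<Longrightarrow> (w', w) \<in> U_eq T"
| trans: "(w, w') \<in> U_eq T \<Longrightarrow> (w', w'') \<in> U_eq T \<Longrightarrow> (w, w'') \<in> U_eq T"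
| cancel: "set u \<subseteq> T \<times> UNIV \<Longrightarrow> set v \<subseteq> T \<times> UNIV \<Longrightarrow> t \<in> T \<Longrightarrow>
           (u @ [(t, b), (t, \<not> b)] @ v, u @ v) \<in> U_eq T"
| relator: "set u \<subseteq> T \<times> UNIV \<Longrightarrow> set v \<subseteq> T \<times> UNIV \<Longrightarrow> r \<in> U_relators T \<Longrightarrow>
           (u @ r @ v, u @ v) \<in> U_eq T"

definition U_grp :: "'a::ab_group_add set \<Rightarrow> ('a \<times> bool) list set monoid" where
  "U_grp T = \<lparr>carrier = lists (T \<times> UNIV) // U_eq T,
     monoid.mult = (\<lambda>A B. \<Union>a\<in>A. \<Union>b\<in>B. U_eq T `` {a @ b}),
     one = U_eq T `` {[]}\<rparr>"

definition U_gen :: "'a::ab_group_add set \<Rightarrow> 'a \<Rightarrow> ('a \<times> bool) list set" where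
  "U_gen T t = U_eq T `` {[(t, True)]}"

end

theory Submission
  imports Defs "HOL-Library.Z2"
begin

text \<open>Because every element of G has order 2, the defining relations say that the generators
  of U are commuting involutions: a word is trivial in U exactly when every letter occurs in it
  an even number of times, and every element of U is represented by a word with distinct
  letters. In W the word x_1 \<dots> x_n evaluates to (\<Sum>_{i<j} x_i \<and> x_j, \<Sum>_i x_i, (-1)^n).
  Symmetrisation, which adds to a \<otimes> b its transpose b \<otimes> a, embeds G \<and> G into G \<otimes> G (a left
  inverse is obtained from a basis of G over F_2 and a well-order of G), and it sends
  \<Sum>_{i<j} x_i \<and> x_j to (\<Sum>_i x_i) \<otimes> (\<Sum>_i x_i) - \<Sum>_i x_i \<otimes> x_i; moreover
  \<Sum>_i x_i \<otimes> x_i = 0 forces \<Sum>_i x_i = 0, as one sees by evaluating on coordinates. Hence a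
  word with distinct letters lies in the kernel iff it has even length and \<Sum>_i x_i \<otimes> x_i = 0.
  Such a nonempty word exists iff T - {0} is 2-dependent, the letter 0 \<in> T being available to
  adjust the parity of the length.\<close>

abbreviation fpair :: "'a \<Rightarrow> 'a \<Rightarrow> ('a \<times> 'a \<Rightarrow>\<^sub>0 int)" where
  "fpair a b \<equiv> frag_of (a, b)"

lemma generate_FA_subgroup: "subgroup (generate FA R) FA"
  by (rule group.generate_is_subgroup[OF group_free_Abelian_group]) auto

lemma generate_FA_zero [simp]: "0 \<in> generate FA R"
  using generate.one[of FA R] by simp

lemma generate_FA_add: "x \<in> generate FA R \<Longrightarrow> y \<in> generate FA R \<Longrightarrow> x + y \<in> generate FA R"
  using generate.eng[of x FA R y] by simp

lemma generate_FA_uminus_iff [simp]: "- x \<in> generate FA R \<longleftrightarrow> x \<in> generate FA R"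
  using subgroup.m_inv_closed[OF generate_FA_subgroup, of _ R] by force

lemma generate_FA_diff: "x \<in> generate FA R \<Longrightarrow> y \<in> generate FA R \<Longrightarrow> x - y \<in> generate FA R"
  using generate_FA_add[of x R "- y"] by simp

lemma generate_FA_sum: "(\<And>i. i \<in> I \<Longrightarrow> f i \<in> generate FA R) \<Longrightarrow> sum f I \<in> generate FA R"
  by (induction I rule: infinite_finite_induct) (auto intro: generate_FA_add)

lemma generate_FA_sum_double:
  "(\<And>x. h x + h x \<in> generate FA R) \<Longrightarrow> sum h I + sum h I \<in> generate FA R"
  using generate_FA_sum[of I "\<lambda>x. h x + h x" R] by (simp add: sum.distrib)

lemma generate_FA_mono: "x \<in> generate FA R \<Longrightarrow> R \<subseteq> R' \<Longrightarrow> x \<in> generate FA R'"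
  using group.mono_generate[of FA R R'] by auto

lemma sum_symdiff_generate_FA:
  assumes "finite A" "finite B" "\<And>x. h x + h x \<in> generate FA R"
  shows "sum h {x. (x \<in> A) \<noteq> (x \<in> B)} - sum h A - sum h B \<in> generate FA R"
proof -
  have "{x. (x \<in> A) \<noteq> (x \<in> B)} = (A - B) \<union> (B - A)" by auto
  then have "sum h {x. (x \<in> A) \<noteq> (x \<in> B)} = sum h (A - B) + sum h (B - A)"
    using assms by (simp only:) (intro sum.union_disjoint, auto)
  moreover have "sum h A = sum h (A \<inter> B) + sum h (A - B)" "sum h B = sum h (B \<inter> A) + sum h (B - A)"
    using assms(1,2) by (simp_all add: sum.Int_Diff)
  ultimately have "sum h {x. (x \<in> A) \<noteq> (x \<in> B)} - sum h A - sum h B = - (\<Sum>x\<in>A \<inter> B. h x + h x)"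
    by (simp add: sum.distrib Int_commute)
  then show ?thesis using generate_FA_sum[of "A \<inter> B" "\<lambda>x. h x + h x"] assms(3) by simp
qed

lemma FA_rcos_eq_iff:
  "generate FA R #>\<^bsub>FA\<^esub> x = generate FA R #>\<^bsub>FA\<^esub> y \<longleftrightarrow> x - y \<in> generate FA R"
proof
  assume "generate FA R #>\<^bsub>FA\<^esub> x = generate FA R #>\<^bsub>FA\<^esub> y"
  moreover have "x \<in> generate FA R #>\<^bsub>FA\<^esub> x"
    unfolding r_coset_def by (auto intro: bexI[of _ 0])
  ultimately obtain h where "h \<in> generate FA R" "x = h + y"
    unfolding r_coset_def by auto
  then show "x - y \<in> generate FA R" by simp
next
  assume xy: "x - y \<in> generate FA R"
  show "generate FA R #>\<^bsub>FA\<^esub> x = generate FA R #>\<^bsub>FA\<^esub> y"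
  proof (auto simp: r_coset_def)
    fix k assume "k \<in> generate FA R"
    then show "\<exists>h\<in>generate FA R. k + x = h + y"
      using xy by (intro bexI[of _ "k + (x - y)"]) (auto intro: generate_FA_add)
  next
    fix k assume "k \<in> generate FA R"
    then show "\<exists>h\<in>generate FA R. k + y = h + x"
      using xy by (intro bexI[of _ "k - (x - y)"]) (auto intro: generate_FA_diff)
  qed
qed

lemma FA_rcos_zero: "generate FA R #>\<^bsub>FA\<^esub> 0 = generate FA R"
  by (auto simp: r_coset_def)

lemma generate_FA_normal: "generate FA R \<lhd> FA"
  by (rule comm_group.subgroup_imp_normal[OF abelian_free_Abelian_group generate_FA_subgroup])

lemma FA_rcos_mult:
  "(generate FA R #>\<^bsub>FA\<^esub> x) <#>\<^bsub>FA\<^esub> (generate FA R #>\<^bsub>FA\<^esub> y) = generate FA R #>\<^bsub>FA\<^esub> (x + y)"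
  using normal.rcos_sum[OF generate_FA_normal, of x y] by simp

lemma FA_rcos_in_carrier: "generate FA R #>\<^bsub>FA\<^esub> x \<in> carrier (FA Mod generate FA R)"
  by (auto simp: carrier_FactGroup)

lemma comm_group_FA_Mod: "comm_group (FA Mod generate FA R)"
proof (rule group.group_comm_groupI)
  show "group (FA Mod generate FA R)"
    by (rule normal.factorgroup_is_group[OF generate_FA_normal])
next
  fix a b assume "a \<in> carrier (FA Mod generate FA R)" "b \<in> carrier (FA Mod generate FA R)"
  then obtain x y where "a = generate FA R #>\<^bsub>FA\<^esub> x" "b = generate FA R #>\<^bsub>FA\<^esub> y"
    by (auto simp: carrier_FactGroup)
  then show "a \<otimes>\<^bsub>FA Mod generate FA R\<^esub> b = b \<otimes>\<^bsub>FA Mod generate FA R\<^esub> a"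
    by (simp add: FA_rcos_mult add.commute)
qed

lemma finprod_FA_Mod:
  assumes "finite A"
  shows "finprod (FA Mod generate FA R) (\<lambda>g. generate FA R #>\<^bsub>FA\<^esub> f g) A
    = generate FA R #>\<^bsub>FA\<^esub> sum f A"
  using assms
proof (induction A rule: finite_induct)
  case empty
  then show ?case
    using comm_group_FA_Mod[of R] by (simp add: comm_group_def comm_monoid.finprod_empty FA_rcos_zero)
next
  case (insert a A)
  have "comm_monoid (FA Mod generate FA R)"
    using comm_group_FA_Mod comm_group_def by blast
  from comm_monoid.finprod_insert[OF this insert(1,2)] insert show ?case
    by (simp add: FA_rcos_in_carrier Pi_def FA_rcos_mult)
qed

abbreviation ker_tensor :: "('a::ab_group_add \<times> 'a \<Rightarrow>\<^sub>0 int) set" where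
  "ker_tensor \<equiv> generate FA tensor_rels"

abbreviation ker_wedge :: "('a::ab_group_add \<times> 'a \<Rightarrow>\<^sub>0 int) set" where
  "ker_wedge \<equiv> generate FA wedge_rels"

lemma ker_tensor_left: "fpair (a + b) c - fpair a c - fpair b c \<in> ker_tensor"
  by (rule generate.incl) (auto simp: tensor_rels_def)

lemma ker_tensor_right: "fpair a (b + c) - fpair a b - fpair a c \<in> ker_tensor"
  unfolding tensor_rels_def by (rule generate.incl, rule UnI2) blast

lemma ker_wedge_if_ker_tensor: "x \<in> ker_tensor \<Longrightarrow> x \<in> ker_wedge"
  by (erule generate_FA_mono) (auto simp: wedge_rels_def)

lemma ker_wedge_diag: "fpair g g \<in> ker_wedge"
  by (rule generate.incl) (auto simp: wedge_rels_def)

lemma ker_tensor_zero_left: "fpair (0::'a::ab_group_add) c \<in> ker_tensor"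
  using ker_tensor_left[of "0::'a" 0 c] by simp

lemma ker_tensor_zero_right: "fpair c (0::'a::ab_group_add) \<in> ker_tensor"
  using ker_tensor_right[of c "0::'a" 0] by simp

lemma ker_tensor_sum_left: "fpair (sum f I) c - (\<Sum>x\<in>I. fpair (f x) c) \<in> ker_tensor"
proof (induction I rule: infinite_finite_induct)
  case (insert a A)
  have "fpair (sum f (insert a A)) c - (\<Sum>x\<in>insert a A. fpair (f x) c) =
        (fpair (f a + sum f A) c - fpair (f a) c - fpair (sum f A) c)
      + (fpair (sum f A) c - (\<Sum>x\<in>A. fpair (f x) c))"
    using insert by (simp add: algebra_simps)
  then show ?case using generate_FA_add[OF ker_tensor_left[of "f a" "sum f A" c] insert.IH] by simp
qed (simp_all add: ker_tensor_zero_left)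

lemma ker_tensor_sum_right: "fpair c (sum f I) - (\<Sum>x\<in>I. fpair c (f x)) \<in> ker_tensor"
proof (induction I rule: infinite_finite_induct)
  case (insert a A)
  have "fpair c (sum f (insert a A)) - (\<Sum>x\<in>insert a A. fpair c (f x)) =
        (fpair c (f a + sum f A) - fpair c (f a) - fpair c (sum f A))
      + (fpair c (sum f A) - (\<Sum>x\<in>A. fpair c (f x)))"
    using insert by (simp add: algebra_simps)
  then show ?case using generate_FA_add[OF ker_tensor_right[of c "f a" "sum f A"] insert.IH] by simp
qed (simp_all add: ker_tensor_zero_right)

lemma ker_tensor_sum_list_right: "fpair c (\<Sum>x\<leftarrow>xs. f x) - (\<Sum>x\<leftarrow>xs. fpair c (f x)) \<in> ker_tensor"
proof (induction xs)
  case (Cons a xs)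
  have "fpair c (\<Sum>x\<leftarrow>a # xs. f x) - (\<Sum>x\<leftarrow>a # xs. fpair c (f x)) =
        (fpair c (f a + (\<Sum>x\<leftarrow>xs. f x)) - fpair c (f a) - fpair c (\<Sum>x\<leftarrow>xs. f x))
      + (fpair c (\<Sum>x\<leftarrow>xs. f x) - (\<Sum>x\<leftarrow>xs. fpair c (f x)))"
    by (simp add: algebra_simps)
  then show ?case
    using generate_FA_add[OF ker_tensor_right[of c "f a" "\<Sum>x\<leftarrow>xs. f x"] Cons.IH] by (simp add: diff_diff_eq)
qed (simp add: ker_tensor_zero_right)

locale elem_abelian_2 =
  fixes type :: "'a::ab_group_add itself"
  assumes add_self_zero: "\<And>x::'a. x + x = 0"
begin

lemma uminus_eq_self [simp]: "- (x::'a) = x"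
  using add_self_zero[of x] by (simp add: add_eq_0_iff2)

lemma diff_eq_add: "(x::'a) - y = x + y"
  by (metis diff_conv_add_uminus uminus_eq_self)

lemma ker_tensor_double: "fpair (a::'a) c + fpair a c \<in> ker_tensor"
proof -
  have "- (fpair (a + a) c - fpair a c - fpair a c) \<in> ker_tensor"
    using ker_tensor_left generate_FA_uminus_iff by blast
  then have "fpair a c + fpair a c - fpair 0 c \<in> ker_tensor"
    by (simp add: add_self_zero algebra_simps)
  then show ?thesis using ker_tensor_zero_left generate_FA_add by (metis diff_add_cancel)
qed

text \<open>Expand (a + b) \<and> (a + b) = 0 by bilinearity.\<close>
lemma ker_wedge_swap_add: "fpair (a::'a) b + fpair b a \<in> ker_wedge"
proof -
  have "fpair a b + fpair b a = fpair (a + b) (a + b)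
      - (fpair (a + b) (a + b) - fpair a (a + b) - fpair b (a + b))
      - (fpair a (a + b) - fpair a a - fpair a b) - (fpair b (a + b) - fpair b a - fpair b b)
      - fpair a a - fpair b b"
    by (simp add: algebra_simps)
  then show ?thesis
    by (metis generate_FA_diff ker_wedge_diag ker_wedge_if_ker_tensor ker_tensor_left ker_tensor_right)
qed

lemma ker_wedge_swap_diff: "fpair (a::'a) b - fpair b a \<in> ker_wedge"
proof -
  have "fpair a b - fpair b a = (fpair a b + fpair b a) - (fpair b a + fpair b a)"
    by (simp add: algebra_simps)
  then show ?thesis
    using ker_wedge_swap_add ker_wedge_if_ker_tensor[OF ker_tensor_double] generate_FA_diff by metis
qed

end

lemma frag_extend_generate_FA:
  assumes "\<And>r. r \<in> R \<Longrightarrow> frag_extend f r \<in> generate FA R'" "x \<in> generate FA R"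
  shows "frag_extend f x \<in> generate FA R'"
  using assms(2)
proof (induction x rule: generate.induct)
  case (inv h) then show ?case using assms(1) by (simp add: frag_extend_minus)
next
  case (eng h1 h2) then show ?case by (simp add: frag_extend_add generate_FA_add)
qed (use assms(1) in simp_all)

text \<open>The \<int>-linear functional on formal sums that takes the value w p on the generator p.\<close>
definition frag_weight :: "('b \<Rightarrow> int) \<Rightarrow> ('b \<Rightarrow>\<^sub>0 int) \<Rightarrow> int" where
  "frag_weight w x = Poly_Mapping.lookup (frag_extend (\<lambda>p. frag_cmul (w p) (frag_of ())) x) ()"

lemma frag_weight_add: "frag_weight w (x + y) = frag_weight w x + frag_weight w y"
  by (simp add: frag_weight_def frag_extend_add lookup_add)

lemma frag_weight_uminus: "frag_weight w (- x) = - frag_weight w x"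
  by (simp add: frag_weight_def frag_extend_minus)

lemma frag_weight_diff: "frag_weight w (x - y) = frag_weight w x - frag_weight w y"
  by (simp add: frag_weight_def frag_extend_diff lookup_minus)

lemma frag_weight_zero [simp]: "frag_weight w 0 = 0"
  by (simp add: frag_weight_def)

lemma frag_weight_frag_of [simp]: "frag_weight w (frag_of p) = w p"
  by (simp add: frag_weight_def lookup_frag_of)

lemma even_frag_weight_generate_FA:
  assumes "\<And>r. r \<in> R \<Longrightarrow> even (frag_weight w r)" "x \<in> generate FA R"
  shows "even (frag_weight w x)"
  using assms(2)
proof (induction x rule: generate.induct)
  case (inv h) then show ?case using assms(1) by (simp add: frag_weight_uminus)
next
  case (eng h1 h2) then show ?case by (simp add: frag_weight_add)
qed (use assms(1) in simp_all)

section \<open>Symmetrisation\<close>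

definition symmetrize :: "('a \<times> 'a \<Rightarrow>\<^sub>0 int) \<Rightarrow> ('a \<times> 'a \<Rightarrow>\<^sub>0 int)" where
  "symmetrize = frag_extend (\<lambda>(a, b). fpair a b + fpair b a)"

lemma symmetrize_frag_of [simp]: "symmetrize (fpair a b) = fpair a b + fpair b a"
  by (simp add: symmetrize_def)

lemma symmetrize_add: "symmetrize (x + y) = symmetrize x + symmetrize y"
  by (simp add: symmetrize_def frag_extend_add)

lemma symmetrize_diff: "symmetrize (x - y) = symmetrize x - symmetrize y"
  by (simp add: symmetrize_def frag_extend_diff)

lemma symmetrize_zero [simp]: "symmetrize 0 = 0"
  by (simp add: symmetrize_def)

lemma symmetrize_sum_list: "symmetrize (\<Sum>x\<leftarrow>xs. f x) = (\<Sum>x\<leftarrow>xs. symmetrize (f x))"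
  by (induction xs) (auto simp: symmetrize_add)

lemma (in elem_abelian_2) symmetrize_ker_wedge:
  assumes "(x :: 'a \<times> 'a \<Rightarrow>\<^sub>0 int) \<in> ker_wedge"
  shows "symmetrize x \<in> ker_tensor"
  unfolding symmetrize_def
proof (rule frag_extend_generate_FA[OF _ assms])
  fix r :: "'a \<times> 'a \<Rightarrow>\<^sub>0 int" assume "r \<in> wedge_rels"
  then consider (left) a b c where "r = fpair (a + b) c - fpair a c - fpair b c"
    | (right) a b c where "r = fpair a (b + c) - fpair a b - fpair a c"
    | (diag) g where "r = fpair g g"
    unfolding wedge_rels_def tensor_rels_def by blast
  then show "frag_extend (\<lambda>(a, b). fpair a b + fpair b a) r \<in> ker_tensor"
  proof cases
    case (left a b c)
    have "frag_extend (\<lambda>(a, b). fpair a b + fpair b a) r =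
      (fpair (a + b) c - fpair a c - fpair b c) + (fpair c (a + b) - fpair c a - fpair c b)"
      unfolding left by (simp add: frag_extend_diff frag_extend_add algebra_simps)
    then show ?thesis using generate_FA_add[OF ker_tensor_left ker_tensor_right] by simp
  next
    case (right a b c)
    have "frag_extend (\<lambda>(a, b). fpair a b + fpair b a) r =
      (fpair a (b + c) - fpair a b - fpair a c) + (fpair (b + c) a - fpair b a - fpair c a)"
      unfolding right by (simp add: frag_extend_diff frag_extend_add algebra_simps)
    then show ?thesis using generate_FA_add[OF ker_tensor_right ker_tensor_left] by simp
  next
    case (diag g)
    then show ?thesis using ker_tensor_double[of g g] by simp
  qed
qed

section \<open>A basis of G over F_2\<close>

lemma bit_add_eq_1_iff: "(x::bit) + y = 1 \<longleftrightarrow> (x = 1) \<noteq> (y = 1)"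
  by (cases x; cases y) auto

definition bit_scale :: "bit \<Rightarrow> 'a::ab_group_add \<Rightarrow> 'a" where
  "bit_scale r x = (if r = 0 then 0 else x)"

lemma (in elem_abelian_2) vector_space_bit_scale: "vector_space (bit_scale :: bit \<Rightarrow> 'a \<Rightarrow> 'a)"
proof unfold_locales
  fix a b :: bit and x y :: 'a
  show "bit_scale a (x + y) = bit_scale a x + bit_scale a y"
    by (cases a) (auto simp: bit_scale_def)
  show "bit_scale (a + b) x = bit_scale a x + bit_scale b x"
    by (cases a; cases b) (auto simp: bit_scale_def add_self_zero)
  show "bit_scale a (bit_scale b x) = bit_scale (a * b) x"
    by (cases a; cases b) (auto simp: bit_scale_def)
  show "bit_scale 1 x = x"
    by (simp add: bit_scale_def)
qed

locale ordered_basis = elem_abelian_2 "TYPE('a::ab_group_add)" +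
  fixes coords :: "'a::ab_group_add \<Rightarrow> 'a set" and prec :: "'a \<Rightarrow> 'a \<Rightarrow> bool"
  assumes coords_add: "b \<in> coords (g + h) \<longleftrightarrow> (b \<in> coords g) \<noteq> (b \<in> coords h)"
    and finite_coords: "finite (coords g)"
    and sum_coords: "(\<Sum>b\<in>coords g. b) = g"
    and prec_irrefl: "\<not> prec x x"
    and prec_asym: "prec x y \<Longrightarrow> \<not> prec y x"
    and prec_total: "x \<noteq> y \<Longrightarrow> prec x y \<or> prec y x"

lemma (in elem_abelian_2) ordered_basis_exists:
  "\<exists>(coords :: 'a \<Rightarrow> 'a set) prec. ordered_basis coords prec"
proof -
  interpret V: vector_space "bit_scale :: bit \<Rightarrow> 'a \<Rightarrow> 'a"
    by (rule vector_space_bit_scale)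
  obtain B where B: "V.independent B" "UNIV \<subseteq> V.span B"
    using V.basis_exists[of UNIV] by blast
  define coords where "coords g = {b. V.representation B g b \<noteq> 0}" for g
  obtain r :: "'a rel" where r: "Well_order r" "Field r = UNIV"
    using well_ordering[where 'a = 'a] by (elim exE conjE)
  have "linear_order_on (Field r) r"
    using r(1) by (simp add: well_order_on_def)
  then have r_linear: "linear_order_on UNIV r"
    using r(2) by simp
  have r_total: "x \<noteq> y \<Longrightarrow> (x, y) \<in> r \<or> (y, x) \<in> r" for x y
    using r_linear unfolding linear_order_on_def total_on_def by blast
  have r_antisym: "(x, y) \<in> r \<Longrightarrow> (y, x) \<in> r \<Longrightarrow> x = y" for x y
    using r_linear unfolding linear_order_on_def partial_order_on_def antisym_def by blast
  define prec where "prec x y \<longleftrightarrow> (x, y) \<in> r \<and> x \<noteq> y" for x y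
  have "ordered_basis coords prec"
  proof (intro ordered_basis.intro elem_abelian_2_axioms ordered_basis_axioms.intro)
    fix b g h
    have "h \<in> V.span B" "g \<in> V.span B"
      using B(2) by auto
    from fun_cong[OF V.representation_add[OF B(1) this]]
    have "V.representation B (g + h) b = V.representation B g b + V.representation B h b" .
    then show "b \<in> coords (g + h) \<longleftrightarrow> (b \<in> coords g) \<noteq> (b \<in> coords h)"
      by (simp add: coords_def bit_not_zero_iff bit_add_eq_1_iff)
  next
    fix g
    show "finite (coords g)"
      using V.finite_representation by (simp add: coords_def)
    have "(\<Sum>b\<in>coords g. bit_scale (V.representation B g b) b) = g"
      unfolding coords_def using V.sum_nonzero_representation_eq[OF B(1)] B(2) by blast
    moreover have "(\<Sum>b\<in>coords g. bit_scale (V.representation B g b) b) = (\<Sum>b\<in>coords g. b)"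
      by (rule sum.cong) (auto simp: coords_def bit_scale_def)
    ultimately show "(\<Sum>b\<in>coords g. b) = g"
      by simp
  next
    fix x y
    show "\<not> prec x x"
      by (simp add: prec_def)
    show "prec x y \<Longrightarrow> \<not> prec y x"
      using r_antisym by (auto simp: prec_def)
    show "x \<noteq> y \<Longrightarrow> prec x y \<or> prec y x"
      using r_total by (auto simp: prec_def)
  qed
  then show ?thesis by blast
qed

context ordered_basis
begin

lemma coords_zero [simp]: "coords 0 = {}"
  using coords_add[of _ 0 0] by auto

lemma coords_eq_empty_iff: "coords g = {} \<longleftrightarrow> g = 0"
  using sum_coords[of g] by auto

lemma coords_add_eq: "coords (g + h) = {b. (b \<in> coords g) \<noteq> (b \<in> coords h)}"
  by (auto simp: coords_add)

lemma coords_sum_list: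
  fixes f :: "'b \<Rightarrow> 'a"
  shows "b \<in> coords (\<Sum>x\<leftarrow>xs. f x) \<longleftrightarrow> odd (length (filter (\<lambda>x. b \<in> coords (f x)) xs))"
  by (induction xs) (auto simp: coords_add)

definition coord_weight :: "'a \<Rightarrow> 'a \<times> 'a \<Rightarrow> int" where
  "coord_weight b p = of_bool (b \<in> coords (fst p) \<and> b \<in> coords (snd p))"

text \<open>The weight coord_weight b comes from the bilinear form (g, h) \<mapsto> g_b h_b on G, so it is
  even on the bilinearity relations.\<close>
lemma even_coord_weight_ker_tensor:
  assumes "x \<in> ker_tensor"
  shows "even (frag_weight (coord_weight b) x)"
proof (rule even_frag_weight_generate_FA[OF _ assms])
  fix r :: "'a \<times> 'a \<Rightarrow>\<^sub>0 int" assume "r \<in> tensor_rels"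
  then consider (left) a a' d where "r = fpair (a + a') d - fpair a d - fpair a' d"
    | (right) a a' d where "r = fpair d (a + a') - fpair d a - fpair d a'"
    unfolding tensor_rels_def by blast
  then show "even (frag_weight (coord_weight b) r)"
  proof cases
    case (left a a' d)
    then show ?thesis
      by (cases "b \<in> coords a"; cases "b \<in> coords a'"; cases "b \<in> coords d")
        (auto simp: frag_weight_diff coord_weight_def coords_add)
  next
    case (right a a' d)
    then show ?thesis
      by (cases "b \<in> coords a"; cases "b \<in> coords a'"; cases "b \<in> coords d")
        (auto simp: frag_weight_diff coord_weight_def coords_add)
  qed
qed

lemma sum_list_eq_0_if_squares_ker_tensor:
  fixes f :: "'b \<Rightarrow> 'a"
  assumes "(\<Sum>x\<leftarrow>xs. fpair (f x) (f x)) \<in> ker_tensor"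
  shows "(\<Sum>x\<leftarrow>xs. f x) = 0"
proof -
  have "b \<notin> coords (\<Sum>x\<leftarrow>xs. f x)" for b
  proof -
    have "frag_weight (coord_weight b) (\<Sum>x\<leftarrow>xs. fpair (f x) (f x))
        = int (length (filter (\<lambda>x. b \<in> coords (f x)) xs))"
      by (induction xs) (auto simp: frag_weight_add coord_weight_def)
    then show ?thesis
      using even_coord_weight_ker_tensor[OF assms, of b] by (simp add: coords_sum_list)
  qed
  then show ?thesis using coords_eq_empty_iff by blast
qed

lemma tensor_elt_diag_inj:
  fixes g h :: 'a
  assumes "tensor_elt g g = tensor_elt h h"
  shows "g = h"
proof -
  have "fpair g g - fpair h h \<in> ker_tensor"
    using assms by (simp add: tensor_elt_def FA_rcos_eq_iff)
  then have "(fpair g g - fpair h h) + (fpair h h + fpair h h) \<in> ker_tensor"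
    using generate_FA_add[OF _ ker_tensor_double[of h h]] by blast
  then have "(\<Sum>x\<leftarrow>[g, h]. fpair x x) \<in> ker_tensor"
    by simp
  then have "g + h = 0"
    using sum_list_eq_0_if_squares_ker_tensor[of id "[g, h]"] by simp
  then show ?thesis
    by (simp add: add_eq_0_iff2)
qed

definition frag_if_prec :: "'a \<Rightarrow> 'a \<Rightarrow> ('a \<times> 'a \<Rightarrow>\<^sub>0 int)" where
  "frag_if_prec x y = (if prec x y then fpair x y else 0)"

definition ordered_frag :: "'a \<Rightarrow> 'a \<Rightarrow> ('a \<times> 'a \<Rightarrow>\<^sub>0 int)" where
  "ordered_frag a b = (\<Sum>x\<in>coords a. \<Sum>y\<in>coords b. frag_if_prec x y)"

text \<open>Expanding a \<otimes> b in the basis and keeping only the terms x \<otimes> y with x \<prec> y gives, modulo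
  the wedge relations, a left inverse of symmetrisation.\<close>
definition desymmetrize :: "('a \<times> 'a \<Rightarrow>\<^sub>0 int) \<Rightarrow> ('a \<times> 'a \<Rightarrow>\<^sub>0 int)" where
  "desymmetrize = frag_extend (\<lambda>(a, b). ordered_frag a b)"

lemma frag_if_prec_double: "frag_if_prec x y + frag_if_prec x y \<in> ker_wedge"
  using ker_wedge_if_ker_tensor[OF ker_tensor_double[of x y]] by (simp add: frag_if_prec_def)

lemma ordered_frag_swap: "ordered_frag a b = (\<Sum>y\<in>coords b. \<Sum>x\<in>coords a. frag_if_prec x y)"
  unfolding ordered_frag_def by (rule sum.swap)

lemma ordered_frag_add_left: "ordered_frag (a + a') d - ordered_frag a d - ordered_frag a' d \<in> ker_wedge"
  unfolding ordered_frag_def coords_add_eq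
  by (intro sum_symdiff_generate_FA finite_coords generate_FA_sum_double frag_if_prec_double)

lemma ordered_frag_add_right: "ordered_frag d (a + a') - ordered_frag d a - ordered_frag d a' \<in> ker_wedge"
  unfolding ordered_frag_swap coords_add_eq
  by (intro sum_symdiff_generate_FA finite_coords generate_FA_sum_double frag_if_prec_double)

lemma desymmetrize_ker_tensor:
  assumes "x \<in> ker_tensor"
  shows "desymmetrize x \<in> ker_wedge"
  unfolding desymmetrize_def
proof (rule frag_extend_generate_FA[OF _ assms])
  fix r :: "'a \<times> 'a \<Rightarrow>\<^sub>0 int" assume "r \<in> tensor_rels"
  then consider (left) a a' d where "r = fpair (a + a') d - fpair a d - fpair a' d"
    | (right) a a' d where "r = fpair d (a + a') - fpair d a - fpair d a'"
    unfolding tensor_rels_def by blast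
  then show "frag_extend (\<lambda>(a, b). ordered_frag a b) r \<in> ker_wedge"
    by cases (simp_all add: frag_extend_diff ordered_frag_add_left ordered_frag_add_right)
qed

lemma fpair_coords_expansion:
  "fpair a b - (\<Sum>x\<in>coords a. \<Sum>y\<in>coords b. fpair x y) \<in> ker_tensor"
proof -
  have "fpair a b - (\<Sum>x\<in>coords a. \<Sum>y\<in>coords b. fpair x y) =
      (fpair (\<Sum>x\<in>coords a. x) b - (\<Sum>x\<in>coords a. fpair x b))
    + (\<Sum>x\<in>coords a. fpair x (\<Sum>y\<in>coords b. y) - (\<Sum>y\<in>coords b. fpair x y))"
    by (simp add: sum_coords sum_subtractf)
  then show ?thesis
    by (simp only:) (intro generate_FA_add generate_FA_sum ker_tensor_sum_left ker_tensor_sum_right)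
qed

lemma fpair_split_prec: "fpair x y - frag_if_prec x y - frag_if_prec y x \<in> ker_wedge"
proof (cases "x = y")
  case True
  then show ?thesis using ker_wedge_diag[of x] by (simp add: frag_if_prec_def prec_irrefl)
next
  case False
  then consider "prec x y" | "prec y x" using prec_total by blast
  then show ?thesis
    using prec_asym ker_wedge_swap_diff[of x y] by cases (auto simp: frag_if_prec_def)
qed

lemma fpair_ordered_frag_split: "fpair a b - (ordered_frag a b + ordered_frag b a) \<in> ker_wedge"
proof -
  let ?E = "\<Sum>x\<in>coords a. \<Sum>y\<in>coords b. fpair x y"
  have "?E - ordered_frag a b - ordered_frag b a
      = (\<Sum>x\<in>coords a. \<Sum>y\<in>coords b. fpair x y - frag_if_prec x y - frag_if_prec y x)"
    unfolding ordered_frag_def[of a b] ordered_frag_swap[of b a] by (simp add: sum_subtractf)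
  also have "\<dots> \<in> ker_wedge"
    by (intro generate_FA_sum fpair_split_prec)
  finally have "?E - ordered_frag a b - ordered_frag b a \<in> ker_wedge" .
  moreover have "fpair a b - ?E \<in> ker_wedge"
    using ker_wedge_if_ker_tensor[OF fpair_coords_expansion] .
  ultimately have "(fpair a b - ?E) + (?E - ordered_frag a b - ordered_frag b a) \<in> ker_wedge"
    by (rule generate_FA_add[rotated])
  then show ?thesis
    by (simp add: algebra_simps)
qed

lemma desymmetrize_symmetrize:
  fixes y :: "'a \<times> 'a \<Rightarrow>\<^sub>0 int"
  shows "y - desymmetrize (symmetrize y) \<in> ker_wedge"
proof -
  have "Poly_Mapping.keys y \<subseteq> UNIV" by simp
  then show ?thesis
  proof (induction y rule: frag_induction)
    case (one x)
    obtain a b where "x = (a, b)" by force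
    then show ?case
      using fpair_ordered_frag_split[of a b] by (simp add: desymmetrize_def frag_extend_add)
  next
    case (diff u v)
    have "u - v - desymmetrize (symmetrize (u - v))
        = (u - desymmetrize (symmetrize u)) - (v - desymmetrize (symmetrize v))"
      by (simp add: desymmetrize_def symmetrize_diff frag_extend_diff)
    then show ?case
      using generate_FA_diff[OF diff.IH] by (simp only:)
  qed (simp add: desymmetrize_def)
qed

lemma ker_wedge_if_symmetrize_ker_tensor:
  fixes y :: "'a \<times> 'a \<Rightarrow>\<^sub>0 int"
  assumes "symmetrize y \<in> ker_tensor"
  shows "y \<in> ker_wedge"
  using generate_FA_add[OF desymmetrize_symmetrize[of y] desymmetrize_ker_tensor[OF assms]] by simp

end

section \<open>Words in the generators of U\<close>

abbreviation letters :: "'a set \<Rightarrow> ('a \<times> bool) set" where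
  "letters T \<equiv> T \<times> UNIV"

lemma U_eq_letters: "(w, w') \<in> U_eq T \<Longrightarrow> set w \<subseteq> letters T \<and> set w' \<subseteq> letters T"
  by (induction rule: U_eq.induct) (auto simp: U_relators_def)

lemma U_eq_context:
  assumes "(a, a') \<in> U_eq T" "set u \<subseteq> letters T" "set v \<subseteq> letters T"
  shows "(u @ a @ v, u @ a' @ v) \<in> U_eq T"
  using assms(1)
proof (induction rule: U_eq.induct)
  case (refl w)
  then show ?case using assms by (intro U_eq.refl) auto
next
  case (cancel u' v' t b)
  have "((u @ u') @ [(t, b), (t, \<not> b)] @ (v' @ v), (u @ u') @ (v' @ v)) \<in> U_eq T"
    using cancel assms by (intro U_eq.cancel) auto
  then show ?case by simp
next
  case (relator u' v' r)
  have "((u @ u') @ r @ (v' @ v), (u @ u') @ (v' @ v)) \<in> U_eq T"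
    using relator assms by (intro U_eq.relator) auto
  then show ?case by simp
qed (blast intro: U_eq.sym U_eq.trans)+

declare U_eq.trans [trans]

lemma U_eq_prefix: "(a, a') \<in> U_eq T \<Longrightarrow> set u \<subseteq> letters T \<Longrightarrow> (u @ a, u @ a') \<in> U_eq T"
  using U_eq_context[of a a' T u "[]"] by simp

lemma U_eq_suffix: "(a, a') \<in> U_eq T \<Longrightarrow> set v \<subseteq> letters T \<Longrightarrow> (a @ v, a' @ v) \<in> U_eq T"
  using U_eq_context[of a a' T "[]" v] by simp

lemma U_eq_cancel_pair: "t \<in> T \<Longrightarrow> ([(t, b), (t, \<not> b)], []) \<in> U_eq T"
  using U_eq.cancel[of "[]" T "[]" t b] by simp

lemma U_eq_square: "t \<in> T \<Longrightarrow> ([(t, True), (t, True)], []) \<in> U_eq T"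
  using U_eq.relator[of "[]" T "[]" "[(t, True), (t, True)]"] by (simp add: U_relators_def)

definition letter_count :: "('a \<times> bool) list \<Rightarrow> 'a \<Rightarrow> nat" where
  "letter_count w t = length (filter (\<lambda>x. fst x = t) w)"

context elem_abelian_2
begin

lemma U_eq_commutator:
  fixes T :: "'a set"
  assumes "t \<in> T" "s \<in> T"
  shows "([(t, True), (s, True), (t, False), (s, False)], []) \<in> U_eq T"
proof -
  have "t + t - s = s"
    by (simp add: add_self_zero diff_eq_add)
  then have "[(t, True), (s, True), (t, False), (s, False)] \<in> U_relators T"
    unfolding U_relators_def using assms by (intro UnI2) (auto intro!: exI[of _ s] exI[of _ t])
  then show ?thesis
    using U_eq.relator[of "[]" T "[]"] by simp
qed

lemma U_eq_inverse_letter: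
  fixes T :: "'a set"
  assumes "t \<in> T"
  shows "([(t, False)], [(t, True)]) \<in> U_eq T"
proof -
  have "([(t, False)] @ [(t, True), (t, True)], [(t, False)]) \<in> U_eq T"
    using U_eq_prefix[OF U_eq_square[OF assms], of "[(t, False)]"] assms by simp
  moreover have "([(t, False), (t, True)] @ [(t, True)], [(t, True)]) \<in> U_eq T"
    using U_eq_suffix[OF U_eq_cancel_pair[OF assms, of False], of "[(t, True)]"] assms by simp
  ultimately show ?thesis
    using U_eq.trans[OF U_eq.sym] by fastforce
qed

lemma U_eq_positive_letter:
  fixes T :: "'a set"
  assumes "t \<in> T"
  shows "([(t, b)], [(t, True)]) \<in> U_eq T"
  using U_eq_inverse_letter[OF assms] U_eq.refl[of "[(t, True)]" T] assms by (cases b) auto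

lemma U_eq_swap_positive:
  fixes T :: "'a set"
  assumes "t \<in> T" "s \<in> T"
  shows "([(t, True), (s, True)], [(s, True), (t, True)]) \<in> U_eq T"
proof -
  have "([(t, True), (s, True)], [(t, True), (s, True)] @ [(t, False), (t, True)]) \<in> U_eq T"
    using U_eq.sym[OF U_eq_prefix[OF U_eq_cancel_pair[OF assms(1), of False],
        of "[(t, True), (s, True)]"]] assms by simp
  also have "([(t, True), (s, True)] @ [(t, False), (t, True)],
      [(t, True), (s, True), (t, False)] @ [(s, False), (s, True)] @ [(t, True)]) \<in> U_eq T"
    using U_eq.sym[OF U_eq_context[OF U_eq_cancel_pair[OF assms(2), of False],
        of "[(t, True), (s, True), (t, False)]" "[(t, True)]"]] assms by simp
  also have "([(t, True), (s, True), (t, False)] @ [(s, False), (s, True)] @ [(t, True)],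
      [(s, True), (t, True)]) \<in> U_eq T"
    using U_eq_suffix[OF U_eq_commutator[OF assms], of "[(s, True), (t, True)]"] assms by simp
  finally show ?thesis .
qed

lemma U_eq_swap:
  fixes T :: "'a set"
  assumes "x \<in> letters T" "y \<in> letters T"
  shows "([x, y], [y, x]) \<in> U_eq T"
proof -
  obtain t b s b' where x: "x = (t, b)" and y: "y = (s, b')" and ts: "t \<in> T" "s \<in> T"
    using assms by auto
  have "([x, y], [(t, True), y]) \<in> U_eq T"
    using U_eq_suffix[OF U_eq_positive_letter[OF ts(1)], of "[y]"] x assms by simp
  also have "([(t, True), y], [(t, True), (s, True)]) \<in> U_eq T"
    using U_eq_prefix[OF U_eq_positive_letter[OF ts(2)], of "[(t, True)]"] y ts by simp
  also have "([(t, True), (s, True)], [(s, True), (t, True)]) \<in> U_eq T"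
    by (rule U_eq_swap_positive[OF ts])
  also have "([(s, True), (t, True)], [y, (t, True)]) \<in> U_eq T"
    using U_eq.sym[OF U_eq_suffix[OF U_eq_positive_letter[OF ts(2)], of "[(t, True)]"]] y ts by simp
  also have "([y, (t, True)], [y, x]) \<in> U_eq T"
    using U_eq.sym[OF U_eq_prefix[OF U_eq_positive_letter[OF ts(1)], of "[y]"]] x assms by simp
  finally show ?thesis .
qed

lemma U_eq_rotate:
  fixes T :: "'a set"
  assumes "x \<in> letters T" "set p \<subseteq> letters T"
  shows "(x # p, p @ [x]) \<in> U_eq T"
  using assms(2)
proof (induction p)
  case Nil
  then show ?case using U_eq.refl[of "[x]" T] assms by simp
next
  case (Cons y p)
  have "([x, y] @ p, [y, x] @ p) \<in> U_eq T"
    using U_eq_suffix[OF U_eq_swap[OF assms(1)], of y p] Cons by simp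
  moreover have "([y] @ (x # p), [y] @ (p @ [x])) \<in> U_eq T"
    using U_eq_prefix[OF Cons.IH, of "[y]"] Cons by simp
  ultimately show ?case
    using U_eq.trans by fastforce
qed

lemma U_eq_cancel_same_letters:
  fixes T :: "'a set"
  assumes "x \<in> letters T" "set p \<subseteq> letters T" "y \<in> letters T" "set q \<subseteq> letters T"
    and "fst x = fst y"
  shows "(x # p @ y # q, p @ q) \<in> U_eq T"
proof -
  obtain t b b' where x: "x = (t, b)" and y: "y = (t, b')" and t: "t \<in> T"
    using assms by (cases x; cases y) auto
  have "([x, y], [(t, True), y]) \<in> U_eq T"
    using U_eq_suffix[OF U_eq_positive_letter[OF t, of b], of "[y]"] x assms by simp
  also have "([(t, True), y], [(t, True), (t, True)]) \<in> U_eq T"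
    using U_eq_prefix[OF U_eq_positive_letter[OF t, of b'], of "[(t, True)]"] y t by simp
  also have "([(t, True), (t, True)], []) \<in> U_eq T"
    by (rule U_eq_square[OF t])
  finally have "(p @ [x, y] @ q, p @ [] @ q) \<in> U_eq T"
    by (rule U_eq_context[OF _ assms(2,4)])
  moreover have "((x # p) @ (y # q), (p @ [x]) @ (y # q)) \<in> U_eq T"
    using U_eq_suffix[OF U_eq_rotate[OF assms(1,2)], of "y # q"] assms by simp
  ultimately show ?thesis
    using U_eq.trans by fastforce
qed

lemma U_eq_Nil_if_even_letter_counts:
  fixes T :: "'a set"
  shows "set z \<subseteq> letters T \<Longrightarrow> \<forall>t. even (letter_count z t) \<Longrightarrow> (z, []) \<in> U_eq T"
proof (induction "length z" arbitrary: z rule: less_induct)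
  case less
  show ?case
  proof (cases z)
    case Nil
    then show ?thesis by (simp add: U_eq.refl)
  next
    case (Cons x z1)
    have "odd (letter_count z1 (fst x))"
      using less.prems(2)[rule_format, of "fst x"] Cons by (simp add: letter_count_def)
    then have "letter_count z1 (fst x) \<noteq> 0"
      by (metis even_zero)
    then obtain y where y: "y \<in> set z1" "fst y = fst x"
      by (auto simp: letter_count_def filter_empty_conv)
    obtain p q where z1: "z1 = p @ y # q"
      using split_list[OF y(1)] by blast
    have "(z, p @ q) \<in> U_eq T"
      using U_eq_cancel_same_letters[of x T p y q] less.prems Cons z1 y by auto
    moreover have "(p @ q, []) \<in> U_eq T"
    proof (rule less.hyps)
      show "length (p @ q) < length z" "set (p @ q) \<subseteq> letters T"
        using less.prems Cons z1 by auto
      show "\<forall>t. even (letter_count (p @ q) t)"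
      proof
        fix t
        have "letter_count z t = letter_count (p @ q) t + (if fst x = t then 2 else 0)"
          using Cons z1 y by (auto simp: letter_count_def)
        then show "even (letter_count (p @ q) t)"
          using less.prems(2)[rule_format, of t] by (cases "fst x = t") auto
      qed
    qed
    ultimately show ?thesis
      using U_eq.trans by blast
  qed
qed

lemma U_eq_distinct_letters:
  fixes T :: "'a set"
  shows "set z \<subseteq> letters T \<Longrightarrow>
    \<exists>z'. (z, z') \<in> U_eq T \<and> distinct (map fst z') \<and> set z' \<subseteq> letters T \<and> length z' \<le> length z"
proof (induction "length z" arbitrary: z rule: less_induct)
  case less
  show ?case
  proof (cases z)
    case Nil
    then show ?thesis by (auto intro: U_eq.refl)
  next
    case (Cons x z1)
    obtain z1' where z1': "(z1, z1') \<in> U_eq T" "distinct (map fst z1')" "set z1' \<subseteq> letters T"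
      "length z1' \<le> length z1"
      using less.hyps[of z1] less.prems Cons by auto
    have x: "x \<in> letters T"
      using less.prems Cons by auto
    have xz1: "([x] @ z1, [x] @ z1') \<in> U_eq T"
      by (rule U_eq_prefix[OF z1'(1)]) (use x in auto)
    show ?thesis
    proof (cases "fst x \<in> fst ` set z1'")
      case True
      then obtain y where y: "y \<in> set z1'" "fst y = fst x"
        by auto
      obtain p q where pq: "z1' = p @ y # q"
        using split_list[OF y(1)] by blast
      have "(x # z1', p @ q) \<in> U_eq T"
        using U_eq_cancel_same_letters[of x T p y q] z1'(3) x pq y by auto
      moreover obtain z'' where z'': "(p @ q, z'') \<in> U_eq T" "distinct (map fst z'')"
        "set z'' \<subseteq> letters T" "length z'' \<le> length (p @ q)"
        using less.hyps[of "p @ q"] z1'(3,4) pq Cons by force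
      ultimately have "(z, z'') \<in> U_eq T"
        using U_eq.trans[OF xz1[simplified]] U_eq.trans Cons by metis
      then show ?thesis
        using z'' z1'(4) pq Cons by (intro exI[of _ z'']) auto
    next
      case False
      then show ?thesis
        using xz1 z1' x Cons by (intro exI[of _ "x # z1'"]) auto
    qed
  qed
qed

lemma U_eq_even_letter_count_iff:
  fixes T :: "'a set"
  assumes "(w, w') \<in> U_eq T"
  shows "even (letter_count w t) \<longleftrightarrow> even (letter_count w' t)"
  using assms
proof (induction rule: U_eq.induct)
  case (cancel u v s b)
  then show ?case by (auto simp: letter_count_def)
next
  case (relator u v r)
  then obtain t0 s where "r = [(t0, True), (t0, True)] \<or>
      r = [(t0, True), (s, True), (t0, False), (t0 + t0 - s, False)]"
    unfolding U_relators_def by blast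
  moreover have "t0 + t0 - s = s"
    by (simp add: add_self_zero diff_eq_add)
  ultimately have "even (letter_count r t)"
    by (auto simp: letter_count_def)
  moreover have "letter_count (u @ r @ v) t = letter_count (u @ v) t + letter_count r t"
    by (simp add: letter_count_def)
  ultimately show ?case by simp
qed auto

lemma U_eq_double_Nil:
  fixes T :: "'a set"
  shows "set w \<subseteq> letters T \<Longrightarrow> (w @ w, []) \<in> U_eq T"
  by (rule U_eq_Nil_if_even_letter_counts) (auto simp: letter_count_def)

end

section \<open>Evaluating words in W\<close>

definition letter_sum :: "('a::ab_group_add \<times> bool) list \<Rightarrow> 'a" where
  "letter_sum w = (\<Sum>x\<leftarrow>w. fst x)"

definition cross_frag :: "('a \<times> bool) list \<Rightarrow> ('a \<times> bool) list \<Rightarrow> ('a \<times> 'a \<Rightarrow>\<^sub>0 int)" where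
  "cross_frag u v = (\<Sum>x\<leftarrow>u. \<Sum>y\<leftarrow>v. fpair (fst x) (fst y))"

fun pair_frag :: "('a \<times> bool) list \<Rightarrow> ('a \<times> 'a \<Rightarrow>\<^sub>0 int)" where
  "pair_frag [] = 0"
| "pair_frag (x # w) = (\<Sum>y\<leftarrow>w. fpair (fst x) (fst y)) + pair_frag w"

definition square_frag :: "('a \<times> bool) list \<Rightarrow> ('a \<times> 'a \<Rightarrow>\<^sub>0 int)" where
  "square_frag w = (\<Sum>x\<leftarrow>w. fpair (fst x) (fst x))"

text \<open>The image of the word x_1 \<dots> x_n under t \<mapsto> (0, t, -1): the first component is
  \<Sum>_{i<j} x_i \<and> x_j because the sign action -g = g of G is trivial.\<close>
definition word_eval :: "('a::ab_group_add \<times> bool) list \<Rightarrow> ('a \<times> 'a \<Rightarrow>\<^sub>0 int) set \<times> 'a \<times> int" where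
  "word_eval w = (ker_wedge #>\<^bsub>FA\<^esub> pair_frag w, letter_sum w, (-1) ^ length w)"

lemma letter_sum_simps [simp]:
  "letter_sum [] = 0" "letter_sum (x # w) = fst x + letter_sum w"
  "letter_sum (u @ v) = letter_sum u + letter_sum v"
  by (auto simp: letter_sum_def)

lemma cross_frag_Cons_left: "cross_frag (x # u) v = (\<Sum>y\<leftarrow>v. fpair (fst x) (fst y)) + cross_frag u v"
  by (simp add: cross_frag_def)

lemma cross_frag_Cons_right: "cross_frag u (y # v) = (\<Sum>x\<leftarrow>u. fpair (fst x) (fst y)) + cross_frag u v"
  by (induction u) (auto simp: cross_frag_def)

lemma cross_frag_append_left: "cross_frag (u @ u') v = cross_frag u v + cross_frag u' v"
  by (simp add: cross_frag_def)

lemma cross_frag_append_right: "cross_frag u (v @ v') = cross_frag u v + cross_frag u v'"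
  by (induction u) (auto simp: cross_frag_def)

lemma pair_frag_append: "pair_frag (u @ v) = pair_frag u + pair_frag v + cross_frag u v"
  by (induction u) (auto simp: cross_frag_Cons_left cross_frag_def)

lemma cross_frag_bilinear: "cross_frag u v - fpair (letter_sum u) (letter_sum v) \<in> ker_tensor"
proof (induction u)
  case Nil
  then show ?case using ker_tensor_zero_left by (simp add: cross_frag_def)
next
  case (Cons x u)
  have "fpair (fst x) (letter_sum v) - (\<Sum>y\<leftarrow>v. fpair (fst x) (fst y)) \<in> ker_tensor"
    using ker_tensor_sum_list_right[of "fst x" fst v] by (simp add: letter_sum_def)
  then have head: "(\<Sum>y\<leftarrow>v. fpair (fst x) (fst y)) - fpair (fst x) (letter_sum v) \<in> ker_tensor"
    by (metis generate_FA_uminus_iff minus_diff_eq)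
  have "((\<Sum>y\<leftarrow>v. fpair (fst x) (fst y)) - fpair (fst x) (letter_sum v))
      + (cross_frag u v - fpair (letter_sum u) (letter_sum v))
      - (fpair (fst x + letter_sum u) (letter_sum v) - fpair (fst x) (letter_sum v)
         - fpair (letter_sum u) (letter_sum v)) \<in> ker_tensor"
    by (rule generate_FA_diff[OF generate_FA_add[OF head Cons.IH] ker_tensor_left])
  then show ?case
    by (simp add: cross_frag_Cons_left algebra_simps)
qed

lemma symmetrize_pair_frag: "symmetrize (pair_frag w) + square_frag w = cross_frag w w"
proof (induction w)
  case (Cons x w)
  have "cross_frag (x # w) (x # w) = fpair (fst x) (fst x) + (\<Sum>y\<leftarrow>w. fpair (fst x) (fst y))
      + ((\<Sum>y\<leftarrow>w. fpair (fst y) (fst x)) + cross_frag w w)"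
    by (simp add: cross_frag_Cons_left cross_frag_Cons_right)
  moreover have "symmetrize (pair_frag (x # w)) = (\<Sum>y\<leftarrow>w. fpair (fst x) (fst y))
      + (\<Sum>y\<leftarrow>w. fpair (fst y) (fst x)) + symmetrize (pair_frag w)"
    by (simp add: symmetrize_add symmetrize_sum_list sum_list_addf)
  ultimately show ?case
    using Cons by (simp add: square_frag_def algebra_simps)
qed (simp add: square_frag_def cross_frag_def)

lemma word_eval_Nil: "word_eval [] = \<one>\<^bsub>amb_grp\<^esub>"
  by (simp add: word_eval_def amb_grp_def wedge_grp_def FA_rcos_zero)

lemma word_eval_single: "word_eval [x] = W_gen (fst x)"
  by (simp add: word_eval_def W_gen_def wedge_grp_def FA_rcos_zero)

lemma word_eval_eq_Nil_iff:
  "word_eval z = word_eval [] \<longleftrightarrow> pair_frag z \<in> ker_wedge \<and> letter_sum z = 0 \<and> even (length z)"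
proof -
  have "ker_wedge #>\<^bsub>FA\<^esub> pair_frag z = ker_wedge #>\<^bsub>FA\<^esub> 0 \<longleftrightarrow> pair_frag z \<in> ker_wedge"
    by (simp add: FA_rcos_eq_iff)
  moreover have "(-1::int) ^ length z = 1 \<longleftrightarrow> even (length z)"
    by (cases "even (length z)") auto
  ultimately show ?thesis
    by (auto simp: word_eval_def FA_rcos_zero)
qed

context elem_abelian_2
begin

lemma word_eval_append:
  fixes u v :: "('a \<times> bool) list"
  shows "word_eval u \<otimes>\<^bsub>amb_grp\<^esub> word_eval v = word_eval (u @ v)"
proof -
  have eq: "pair_frag u + pair_frag v + fpair (letter_sum u) (letter_sum v) - pair_frag (u @ v)
      = - (cross_frag u v - fpair (letter_sum u) (letter_sum v))"
    by (simp add: pair_frag_append)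
  have "pair_frag u + pair_frag v + fpair (letter_sum u) (letter_sum v) - pair_frag (u @ v) \<in> ker_wedge"
    unfolding eq generate_FA_uminus_iff by (rule ker_wedge_if_ker_tensor[OF cross_frag_bilinear])
  then have "ker_wedge #>\<^bsub>FA\<^esub> (pair_frag u + pair_frag v + fpair (letter_sum u) (letter_sum v))
      = ker_wedge #>\<^bsub>FA\<^esub> pair_frag (u @ v)"
    by (simp only: FA_rcos_eq_iff)
  then show ?thesis
    by (simp add: word_eval_def amb_grp_def wedge_grp_def wedge_elt_def sact_def FA_rcos_mult power_add)
qed

lemma word_eval_insert:
  fixes r u v :: "('a \<times> bool) list"
  assumes "pair_frag r \<in> ker_wedge" "letter_sum r = 0" "even (length r)"
  shows "word_eval (u @ r @ v) = word_eval (u @ v)"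
proof -
  have "pair_frag (u @ r @ v) - pair_frag (u @ v) = pair_frag r
      + (cross_frag r v - fpair (letter_sum r) (letter_sum v)) + fpair 0 (letter_sum v)
      + (cross_frag u r - fpair (letter_sum u) (letter_sum r)) + fpair (letter_sum u) 0"
    using assms(2) by (simp add: pair_frag_append cross_frag_append_left cross_frag_append_right algebra_simps)
  also have "\<dots> \<in> ker_wedge"
    by (intro generate_FA_add assms(1) ker_wedge_if_ker_tensor cross_frag_bilinear
        ker_tensor_zero_left ker_tensor_zero_right)
  finally have "ker_wedge #>\<^bsub>FA\<^esub> pair_frag (u @ r @ v) = ker_wedge #>\<^bsub>FA\<^esub> pair_frag (u @ v)"
    by (simp add: FA_rcos_eq_iff)
  then show ?thesis
    using assms(2,3) by (simp add: word_eval_def power_add)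
qed

lemma word_eval_U_eq:
  fixes T :: "'a set"
  assumes "(w, w') \<in> U_eq T"
  shows "word_eval w = word_eval w'"
  using assms
proof (induction rule: U_eq.induct)
  case (cancel u v t b)
  show ?case
    by (rule word_eval_insert) (auto simp: ker_wedge_diag add_self_zero)
next
  case (relator u v r)
  then obtain t s where "r = [(t, True), (t, True)] \<or>
      r = [(t, True), (s, True), (t, False), (t + t - s, False)]"
    unfolding U_relators_def by blast
  moreover have "t + t - s = s"
    by (simp add: add_self_zero diff_eq_add)
  ultimately consider "r = [(t, True), (t, True)]" | "r = [(t, True), (s, True), (t, False), (s, False)]"
    by auto
  then show ?case
  proof cases
    case 1
    then show ?thesis
      by (intro word_eval_insert) (auto simp: ker_wedge_diag add_self_zero)
  next
    case 2
    have "pair_frag r = fpair t t + fpair s s + (fpair t s + fpair s t) + (fpair t s + fpair t s)"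
      by (simp add: 2 algebra_simps)
    then have "pair_frag r \<in> ker_wedge"
      by (simp only:) (intro generate_FA_add ker_wedge_diag ker_wedge_swap_add
          ker_wedge_if_ker_tensor[OF ker_tensor_double])
    moreover have "letter_sum r = (t + t) + (s + s)"
      by (simp add: 2 algebra_simps)
    ultimately show ?thesis
      by (intro word_eval_insert) (simp_all add: 2 add_self_zero)
  qed
qed auto

end

abbreviation word_class :: "'a::ab_group_add set \<Rightarrow> ('a \<times> bool) list \<Rightarrow> ('a \<times> bool) list set" where
  "word_class T w \<equiv> U_eq T `` {w}"

lemma equiv_U_eq: "equiv (lists (letters T)) (U_eq T)"
proof (rule equivI)
  show "U_eq T \<subseteq> lists (letters T) \<times> lists (letters T)"
    by (auto dest!: U_eq_letters)
  show "refl_on (lists (letters T)) (U_eq T)"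
    unfolding refl_on_def by (auto intro: U_eq.refl)
  show "sym (U_eq T)"
    unfolding sym_def using U_eq.sym by blast
  show "trans (U_eq T)"
    unfolding trans_def using U_eq.trans by blast
qed

lemma carrier_U_grpE:
  assumes "A \<in> carrier (U_grp T)"
  obtains w where "set w \<subseteq> letters T" "A = word_class T w"
  using assms unfolding U_grp_def quotient_def by auto

lemma word_class_in_carrier: "set w \<subseteq> letters T \<Longrightarrow> word_class T w \<in> carrier (U_grp T)"
  unfolding U_grp_def quotient_def by auto

lemma word_class_eq_iff:
  "set w \<subseteq> letters T \<Longrightarrow> set w' \<subseteq> letters T \<Longrightarrow>
    word_class T w = word_class T w' \<longleftrightarrow> (w, w') \<in> U_eq T"
proof -
  assume "set w \<subseteq> letters T" "set w' \<subseteq> letters T"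
  then have "w \<in> lists (letters T)" "w' \<in> lists (letters T)"
    by auto
  then show ?thesis
    using eq_equiv_class_iff[OF equiv_U_eq] by blast
qed

lemma word_class_mult:
  assumes "set u \<subseteq> letters T" "set v \<subseteq> letters T"
  shows "word_class T u \<otimes>\<^bsub>U_grp T\<^esub> word_class T v = word_class T (u @ v)"
proof -
  have "U_eq T `` {u' @ v'} = word_class T (u @ v)" if "u' \<in> word_class T u" "v' \<in> word_class T v" for u' v'
  proof -
    have uv: "(u, u') \<in> U_eq T" "(v, v') \<in> U_eq T"
      using that by auto
    have "(u @ v, u' @ v) \<in> U_eq T"
      using U_eq_suffix[OF uv(1)] assms by auto
    also have "(u' @ v, u' @ v') \<in> U_eq T"
      using U_eq_prefix[OF uv(2)] U_eq_letters[OF uv(1)] by auto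
    finally show ?thesis
      using equiv_class_eq[OF equiv_U_eq] by metis
  qed
  note classes = this
  have "u \<in> word_class T u" "v \<in> word_class T v"
    using assms by (auto intro: U_eq.refl)
  then have "(\<Union>u'\<in>word_class T u. \<Union>v'\<in>word_class T v. U_eq T `` {u' @ v'}) = word_class T (u @ v)"
    using classes by (intro equalityI) blast+
  then show ?thesis
    unfolding U_grp_def by simp
qed

lemma carrier_W_grp: "carrier (W_grp T) = generate amb_grp (carrier amb_grp \<inter> W_gen ` T)"
  by (simp add: W_grp_def subgroup_generated_def)

lemma mult_W_grp: "x \<otimes>\<^bsub>W_grp T\<^esub> y = x \<otimes>\<^bsub>amb_grp\<^esub> y"
  by (simp add: W_grp_def subgroup_generated_def)

definition eval_hom ::
  "'a::ab_group_add set \<Rightarrow> ('a \<times> bool) list set \<Rightarrow> ('a \<times> 'a \<Rightarrow>\<^sub>0 int) set \<times> 'a \<times> int" where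
  "eval_hom T A = word_eval (SOME w. w \<in> A)"

definition eval_faithful :: "'a::ab_group_add set \<Rightarrow> bool" where
  "eval_faithful T \<longleftrightarrow> (\<forall>w w'. set w \<subseteq> letters T \<longrightarrow> set w' \<subseteq> letters T \<longrightarrow>
     word_eval w = word_eval w' \<longrightarrow> (w, w') \<in> U_eq T)"

lemma inj_on_iff_eval_faithful:
  assumes "\<And>w. set w \<subseteq> letters T \<Longrightarrow> \<phi> (word_class T w) = word_eval w"
  shows "inj_on \<phi> (carrier (U_grp T)) \<longleftrightarrow> eval_faithful T"
proof
  assume inj: "inj_on \<phi> (carrier (U_grp T))"
  show "eval_faithful T"
    unfolding eval_faithful_def
  proof (intro allI impI)
    fix w w' assume w: "set w \<subseteq> letters T" "set w' \<subseteq> letters T" "word_eval w = word_eval w'"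
    then have "\<phi> (word_class T w) = \<phi> (word_class T w')"
      using assms by simp
    then show "(w, w') \<in> U_eq T"
      using inj word_class_in_carrier word_class_eq_iff w by (metis inj_on_def)
  qed
next
  assume faithful: "eval_faithful T"
  show "inj_on \<phi> (carrier (U_grp T))"
  proof (rule inj_onI)
    fix A B assume "A \<in> carrier (U_grp T)" "B \<in> carrier (U_grp T)" and eq: "\<phi> A = \<phi> B"
    then obtain w w' where w: "set w \<subseteq> letters T" "A = word_class T w"
      and w': "set w' \<subseteq> letters T" "B = word_class T w'"
      by (metis carrier_U_grpE)
    then have "word_eval w = word_eval w'"
      using eq assms by simp
    then show "A = B"
      using faithful w w' word_class_eq_iff unfolding eval_faithful_def by blast
  qed
qed

context elem_abelian_2
begin

lemma eval_hom_word_class: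
  fixes T :: "'a set"
  assumes "set w \<subseteq> letters T"
  shows "eval_hom T (word_class T w) = word_eval w"
proof -
  have "w \<in> word_class T w"
    using assms by (auto intro: U_eq.refl)
  then have "(SOME v. v \<in> word_class T w) \<in> word_class T w"
    by (rule someI)
  then have "(w, SOME v. v \<in> word_class T w) \<in> U_eq T"
    by simp
  then show ?thesis
    unfolding eval_hom_def using word_eval_U_eq by metis
qed

lemma word_eval_in_W:
  fixes T :: "'a set"
  shows "set w \<subseteq> letters T \<Longrightarrow> word_eval w \<in> carrier (W_grp T)"
proof (induction w)
  case Nil
  then show ?case by (simp add: carrier_W_grp word_eval_Nil generate.one)
next
  case (Cons x w)
  have "ker_wedge \<in> carrier wedge_grp"
    using FA_rcos_in_carrier[of wedge_rels 0] by (simp add: wedge_grp_def FA_rcos_zero)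
  then have "W_gen (fst x) \<in> carrier amb_grp \<inter> W_gen ` T"
    using Cons.prems by (auto simp: W_gen_def amb_grp_def wedge_grp_def)
  then have "word_eval [x] \<otimes>\<^bsub>amb_grp\<^esub> word_eval w \<in> carrier (W_grp T)"
    using Cons by (auto simp: carrier_W_grp word_eval_single intro: generate.eng generate.incl)
  then show ?case
    using word_eval_append[of "[x]" w] by simp
qed

lemma eval_hom_hom:
  fixes T :: "'a set"
  shows "eval_hom T \<in> hom (U_grp T) (W_grp T)"
proof (rule homI)
  fix A assume "A \<in> carrier (U_grp T)"
  then obtain w where "set w \<subseteq> letters T" "A = word_class T w"
    by (rule carrier_U_grpE)
  then show "eval_hom T A \<in> carrier (W_grp T)"
    using eval_hom_word_class word_eval_in_W by simp
next
  fix A B assume "A \<in> carrier (U_grp T)" "B \<in> carrier (U_grp T)"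
  then obtain u v where "set u \<subseteq> letters T" "A = word_class T u" "set v \<subseteq> letters T" "B = word_class T v"
    by (metis carrier_U_grpE)
  then show "eval_hom T (A \<otimes>\<^bsub>U_grp T\<^esub> B) = eval_hom T A \<otimes>\<^bsub>W_grp T\<^esub> eval_hom T B"
    by (simp add: word_class_mult eval_hom_word_class mult_W_grp word_eval_append)
qed

lemma eval_hom_U_gen:
  fixes T :: "'a set"
  shows "t \<in> T \<Longrightarrow> eval_hom T (U_gen T t) = W_gen t"
  unfolding U_gen_def using eval_hom_word_class[of "[(t, True)]" T] word_eval_single[of "(t, True)"]
  by simp

text \<open>The assumption 0 \<in> T is used only to write the empty word as the product (0^U)(0^U)
  of generators, since U_grp is not known to be a group at this point.\<close>
lemma hom_word_class_eq_word_eval: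
  fixes T :: "'a set"
  assumes "0 \<in> T" "\<phi> \<in> hom (U_grp T) (W_grp T)" "\<forall>t\<in>T. \<phi> (U_gen T t) = W_gen t"
  shows "set w \<subseteq> letters T \<Longrightarrow> \<phi> (word_class T w) = word_eval w"
proof (induction w)
  case Nil
  let ?z = "[(0::'a, True)]"
  have z: "set ?z \<subseteq> letters T"
    using assms(1) by auto
  have "word_class T [] = word_class T (?z @ ?z)"
    using word_class_eq_iff[of "[]" T "?z @ ?z"] U_eq.sym[OF U_eq_square[OF assms(1)]] z by auto
  also have "\<dots> = U_gen T 0 \<otimes>\<^bsub>U_grp T\<^esub> U_gen T 0"
    using word_class_mult[OF z z] by (simp add: U_gen_def)
  finally have "\<phi> (word_class T []) = \<phi> (U_gen T 0) \<otimes>\<^bsub>W_grp T\<^esub> \<phi> (U_gen T 0)"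
    using assms(2) word_class_in_carrier[OF z] by (simp add: hom_mult U_gen_def)
  also have "\<dots> = word_eval ?z \<otimes>\<^bsub>amb_grp\<^esub> word_eval ?z"
    using assms(1,3) by (simp add: mult_W_grp word_eval_single)
  also have "\<dots> = word_eval []"
    using word_eval_append[of ?z ?z] word_eval_U_eq[OF U_eq_square[OF assms(1)]] by simp
  finally show ?case .
next
  case (Cons x w)
  obtain t b where x: "x = (t, b)" and t: "t \<in> T"
    using Cons.prems by (cases x) auto
  have xT: "set [x] \<subseteq> letters T" and wT: "set w \<subseteq> letters T"
    using Cons.prems by auto
  have "word_class T [x] = U_gen T t"
    unfolding U_gen_def using word_class_eq_iff[of "[x]" T "[(t, True)]"] U_eq_positive_letter[OF t, of b] x t
    by auto
  moreover have "word_class T (x # w) = word_class T [x] \<otimes>\<^bsub>U_grp T\<^esub> word_class T w"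
    using word_class_mult[OF xT wT] by simp
  ultimately have "\<phi> (word_class T (x # w)) = \<phi> (U_gen T t) \<otimes>\<^bsub>W_grp T\<^esub> \<phi> (word_class T w)"
    using assms(2) word_class_in_carrier[OF xT] word_class_in_carrier[OF wT] by (simp add: hom_mult)
  also have "\<dots> = word_eval [x] \<otimes>\<^bsub>amb_grp\<^esub> word_eval w"
    using assms(3) t Cons.IH wT word_eval_single[of x] x by (simp add: mult_W_grp)
  also have "\<dots> = word_eval (x # w)"
    using word_eval_append[of "[x]" w] by simp
  finally show ?case .
qed

end

section \<open>Faithfulness and 2-independence\<close>

lemma comm_monoid_tensor_grp: "comm_monoid (tensor_grp :: ('a::ab_group_add \<times> 'a \<Rightarrow>\<^sub>0 int) set monoid)"
  using comm_group_FA_Mod[of tensor_rels] unfolding tensor_grp_def comm_group_def by blast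

lemma tensor_elt_in_carrier: "tensor_elt g h \<in> carrier tensor_grp"
  unfolding tensor_elt_def tensor_grp_def by (rule FA_rcos_in_carrier)

context ordered_basis
begin

lemma inj_on_tensor_square: "inj_on (\<lambda>g. tensor_elt g g) (A :: 'a set)"
  by (rule inj_onI) (rule tensor_elt_diag_inj)

lemma finprod_tensor_squares:
  assumes "finite S"
  shows "finprod tensor_grp id ((\<lambda>g. tensor_elt g g) ` S) = ker_tensor #>\<^bsub>FA\<^esub> (\<Sum>g\<in>S. fpair (g::'a) g)"
proof -
  have "finprod tensor_grp id ((\<lambda>g. tensor_elt g g) ` S) = finprod tensor_grp (\<lambda>g. id (tensor_elt g g)) S"
    by (rule comm_monoid.finprod_reindex[OF comm_monoid_tensor_grp])
      (auto simp: tensor_elt_in_carrier inj_on_tensor_square)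
  also have "\<dots> = ker_tensor #>\<^bsub>FA\<^esub> (\<Sum>g\<in>S. fpair g g)"
    unfolding tensor_grp_def tensor_elt_def id_def by (rule finprod_FA_Mod[OF assms])
  finally show ?thesis .
qed

lemma finprod_tensor_squares_eq_one_iff:
  assumes "finite S"
  shows "finprod tensor_grp id ((\<lambda>g. tensor_elt g g) ` S) = \<one>\<^bsub>tensor_grp\<^esub>
    \<longleftrightarrow> (\<Sum>g\<in>S. fpair (g::'a) g) \<in> ker_tensor"
proof -
  have "\<one>\<^bsub>tensor_grp\<^esub> = ker_tensor #>\<^bsub>FA\<^esub> (0 :: 'a \<times> 'a \<Rightarrow>\<^sub>0 int)"
    by (simp add: tensor_grp_def FA_rcos_zero)
  then show ?thesis
    unfolding finprod_tensor_squares[OF assms] by (simp only: FA_rcos_eq_iff diff_zero)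
qed

lemma two_dependent_iff_squares:
  "two_dependent (M :: 'a set) \<longleftrightarrow>
    (\<exists>S. finite S \<and> S \<noteq> {} \<and> S \<subseteq> M \<and> (\<Sum>g\<in>S. fpair g g) \<in> ker_tensor)"
proof
  assume "two_dependent M"
  then obtain F where F: "finite F" "F \<noteq> {}" "F \<subseteq> (\<lambda>g. tensor_elt g g) ` M"
    "finprod tensor_grp id F = \<one>\<^bsub>tensor_grp\<^esub>"
    unfolding two_dependent_def by blast
  define S where "S = {g \<in> M. tensor_elt g g \<in> F}"
  have FS: "F = (\<lambda>g. tensor_elt g g) ` S"
    using F(3) unfolding S_def by auto
  then have S: "finite S"
    using F(1) finite_image_iff[OF inj_on_tensor_square] by simp
  moreover have "S \<noteq> {}"
    using F(2) FS by blast
  moreover have "S \<subseteq> M"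
    unfolding S_def by blast
  moreover have "(\<Sum>g\<in>S. fpair g g) \<in> ker_tensor"
    using F(4) FS finprod_tensor_squares_eq_one_iff[OF S] by simp
  ultimately show "\<exists>S. finite S \<and> S \<noteq> {} \<and> S \<subseteq> M \<and> (\<Sum>g\<in>S. fpair g g) \<in> ker_tensor"
    by blast
next
  assume "\<exists>S. finite S \<and> S \<noteq> {} \<and> S \<subseteq> M \<and> (\<Sum>g\<in>S. fpair g g) \<in> ker_tensor"
  then obtain S where S: "finite S" "S \<noteq> {}" "S \<subseteq> M" "(\<Sum>g\<in>S. fpair g g) \<in> ker_tensor"
    by blast
  then have "finprod tensor_grp id ((\<lambda>g. tensor_elt g g) ` S) = \<one>\<^bsub>tensor_grp\<^esub>"
    using finprod_tensor_squares_eq_one_iff by blast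
  with S show "two_dependent M"
    unfolding two_dependent_def by (intro exI[of _ "(\<lambda>g. tensor_elt g g) ` S"]) auto
qed

lemma word_eval_eq_Nil_iff_squares:
  fixes z :: "('a \<times> bool) list"
  shows "word_eval z = word_eval [] \<longleftrightarrow> square_frag z \<in> ker_tensor \<and> even (length z)"
proof -
  have cross: "cross_frag z z \<in> ker_tensor" if "letter_sum z = 0"
    using generate_FA_add[OF cross_frag_bilinear[of z z] ker_tensor_zero_left[of 0]] that by simp
  have sym: "symmetrize (pair_frag z) = cross_frag z z - square_frag z"
    using symmetrize_pair_frag[of z] by (simp add: algebra_simps)
  show ?thesis
  proof
    assume "word_eval z = word_eval []"
    then have "pair_frag z \<in> ker_wedge" "letter_sum z = 0" "even (length z)"
      by (auto simp: word_eval_eq_Nil_iff)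
    moreover have "square_frag z = cross_frag z z - symmetrize (pair_frag z)"
      by (simp add: sym)
    ultimately show "square_frag z \<in> ker_tensor \<and> even (length z)"
      using generate_FA_diff[OF cross symmetrize_ker_wedge] by simp
  next
    assume squares: "square_frag z \<in> ker_tensor \<and> even (length z)"
    then have "letter_sum z = 0"
      using sum_list_eq_0_if_squares_ker_tensor[of fst z] by (simp add: square_frag_def letter_sum_def)
    moreover from this have "pair_frag z \<in> ker_wedge"
      using ker_wedge_if_symmetrize_ker_tensor generate_FA_diff[OF cross] squares sym by simp
    ultimately show "word_eval z = word_eval []"
      using squares by (simp add: word_eval_eq_Nil_iff)
  qed
qed

lemma square_frag_distinct:
  "distinct (map fst z) \<Longrightarrow> square_frag z = (\<Sum>g\<in>fst ` set z. fpair (g::'a) g)"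
  using sum_list_distinct_conv_sum_set[of "map fst z" "\<lambda>g. fpair g g"]
  by (simp add: square_frag_def comp_def)

lemma eval_faithful_if_two_independent:
  fixes T :: "'a set"
  assumes "two_independent (T - {0})"
  shows "eval_faithful T"
  unfolding eval_faithful_def
proof (intro allI impI)
  fix w w' assume w: "set w \<subseteq> letters T" and w': "set w' \<subseteq> letters T"
    and eq: "word_eval w = word_eval w'"
  obtain z where z: "(w @ w', z) \<in> U_eq T" "distinct (map fst z)" "set z \<subseteq> letters T"
    using U_eq_distinct_letters[of "w @ w'" T] w w' by auto
  have "word_eval z = word_eval w \<otimes>\<^bsub>amb_grp\<^esub> word_eval w'"
    using word_eval_U_eq[OF z(1)] word_eval_append[of w w'] by simp
  also have "\<dots> = word_eval (w @ w)"
    by (simp add: eq[symmetric] word_eval_append)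
  also have "\<dots> = word_eval []"
    by (rule word_eval_U_eq[OF U_eq_double_Nil[OF w]])
  finally have squares: "(\<Sum>g\<in>fst ` set z. fpair g g) \<in> ker_tensor" and even: "even (length z)"
    by (simp_all add: word_eval_eq_Nil_iff_squares square_frag_distinct[OF z(2)])
  have "z = []"
  proof (rule ccontr)
    assume "z \<noteq> []"
    have "fst ` set z - {0} \<noteq> {}"
    proof
      assume "fst ` set z - {0} = {}"
      then have "card (fst ` set z) \<le> 1"
        using card_mono[of "{0}" "fst ` set z"] by auto
      moreover have "card (fst ` set z) = length z"
        using distinct_card[OF z(2)] by simp
      moreover have "length z \<noteq> 0"
        using \<open>z \<noteq> []\<close> by simp
      ultimately show False
        using even by presburger
    qed
    moreover have "(\<Sum>g\<in>fst ` set z - {0}. fpair g g) \<in> ker_tensor"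
      using squares ker_tensor_zero_left[of 0] by (auto simp: sum_diff1 intro: generate_FA_diff)
    moreover have "fst ` set z - {0} \<subseteq> T - {0}"
      using z(3) by auto
    ultimately have "two_dependent (T - {0})"
      unfolding two_dependent_iff_squares by (intro exI[of _ "fst ` set z - {0}"]) auto
    with assms show False
      by (simp add: two_independent_def)
  qed
  have "(w, w @ w' @ w') \<in> U_eq T"
    using U_eq.sym[OF U_eq_prefix[OF U_eq_double_Nil[OF w'] w]] by simp
  also have "(w @ w' @ w', w') \<in> U_eq T"
    using U_eq_suffix[OF z(1) w'] \<open>z = []\<close> by simp
  finally show "(w, w') \<in> U_eq T" .
qed

lemma two_independent_if_eval_faithful:
  fixes T :: "'a set"
  assumes "0 \<in> T" "eval_faithful T"
  shows "two_independent (T - {0})"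
  unfolding two_independent_def
proof
  assume "two_dependent (T - {0})"
  then obtain S where S: "finite S" "S \<noteq> {}" "S \<subseteq> T - {0}" "(\<Sum>g\<in>S. fpair g g) \<in> ker_tensor"
    unfolding two_dependent_iff_squares by blast
  define S' where "S' = (if even (card S) then S else insert 0 S)"
  have "0 \<notin> S"
    using S(3) by blast
  then have S': "finite S'" "S' \<subseteq> T" "S' \<noteq> {}" "even (card S')" "(\<Sum>g\<in>S'. fpair g g) \<in> ker_tensor"
    using S assms(1) ker_tensor_zero_left[of 0]
    by (auto simp: S'_def intro: generate_FA_add)
  obtain xs where "set xs = S'" "distinct xs"
    using finite_distinct_list[OF S'(1)] by blast
  moreover obtain y ys where "xs = y # ys"
    using \<open>set xs = S'\<close> S'(3) by (cases xs) auto
  ultimately have ys: "set (y # ys) = S'" "distinct (y # ys)"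
    by simp_all
  define z where "z = map (\<lambda>g. (g, True)) (y # ys)"
  have "word_eval z = word_eval []"
    using S' ys distinct_card[OF ys(2)]
    by (simp add: word_eval_eq_Nil_iff_squares square_frag_distinct z_def image_image comp_def)
  moreover have "set z \<subseteq> letters T"
    using S'(2) ys(1) by (auto simp: z_def)
  ultimately have "(z, []) \<in> U_eq T"
    using assms(2) unfolding eval_faithful_def by simp
  moreover have "letter_count z y = 1"
    using ys(2) by (auto simp: letter_count_def z_def filter_map comp_def filter_empty_conv)
  ultimately show False
    using U_eq_even_letter_count_iff[of z "[]" T y] by (simp add: letter_count_def)
qed

end

lemma (in elem_abelian_2) eval_faithful_iff_two_independent:
  fixes T :: "'a set"
  assumes "0 \<in> T"
  shows "eval_faithful T \<longleftrightarrow> two_independent (T - {0})"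
proof -
  obtain coords :: "'a \<Rightarrow> 'a set" and prec where "ordered_basis coords prec"
    using ordered_basis_exists by blast
  then interpret ordered_basis coords prec .
  show ?thesis
    using eval_faithful_if_two_independent two_independent_if_eval_faithful assms by blast
qed

theorem theorem4p4:
  fixes T :: "'a::ab_group_add set"
  assumes "elementary_abelian_2 TYPE('a)"
    and "add_span T = UNIV"
    and "0 \<in> T"
  shows "(\<exists>\<phi>. \<phi> \<in> hom (U_grp T) (W_grp T) \<and> (\<forall>t\<in>T. \<phi> (U_gen T t) = W_gen t)) \<and>
         (\<forall>\<phi>. \<phi> \<in> hom (U_grp T) (W_grp T) \<and> (\<forall>t\<in>T. \<phi> (U_gen T t) = W_gen t) \<longrightarrow>
           (inj_on \<phi> (carrier (U_grp T)) \<longleftrightarrow> two_independent (T - {0})))"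
proof -
  interpret elem_abelian_2 "TYPE('a)"
    using assms(1) by unfold_locales (simp add: elementary_abelian_2_def)
  have "\<phi> (word_class T w) = word_eval w"
    if "\<phi> \<in> hom (U_grp T) (W_grp T)" "\<forall>t\<in>T. \<phi> (U_gen T t) = W_gen t" "set w \<subseteq> letters T" for \<phi> w
    using hom_word_class_eq_word_eval[OF assms(3)] that by blast
  then show ?thesis
    using eval_hom_hom eval_hom_U_gen inj_on_iff_eval_faithful eval_faithful_iff_two_independent[OF assms(3)]
    by blast
qed

end
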